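(* Let $z\in\mathbb{R}^n$ be a unit vector and $H$ a real symmetric $n\times n$ matrix, and set $H_+=(I-zz^T)H(I-zz^T)+zz^T$. Then $\operatorname{trace}\big((H_+-I)(H_+-H)\big)=0$; consequently $$\|(H-I)z\|^2\le \|H-I\|^2-\|H_+-I\|^2;$$ and furthermore $\lambda_{\min}(H_+)\ge\min\{\lambda_{\min}(H),1\}$.
   Context: For vectors, $\|\cdot\|$ is the Euclidean norm; for symmetric matrices, $\|\cdot\|$ is the norm induced by the inner product $\langle X,Y\rangle=\operatorname{trace}(XY)$ (the Frobenius norm). $\lambda_{\min}(H)$ denotes the smallest eigenvalue of $H$. *)

theory Defs
  imports "HOL-Analysis.Analysis"
begin

definition outer :: "real^'n \<Rightarrow> real^'n \<Rightarrow> real^'n^'n" where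
  "outer x y = (\<chi> i j. x$i * y$j)"

definition symmetric_mat :: "real^'n^'n \<Rightarrow> bool" where
  "symmetric_mat A \<longleftrightarrow> transpose A = A"

definition mat_inner :: "real^'n^'n \<Rightarrow> real^'n^'n \<Rightarrow> real" where
  "mat_inner X Y = trace (X ** Y)"

definition frob_norm :: "real^'n^'n \<Rightarrow> real" where
  "frob_norm X = sqrt (mat_inner X X)"

definition eigenvalues :: "real^'n^'n \<Rightarrow> real set" where
  "eigenvalues A = {c. \<exists>v. v \<noteq> 0 \<and> A *v v = c *\<^sub>R v}"

definition lambda_min :: "real^'n^'n \<Rightarrow> real" where
  "lambda_min A = Min (eigenvalues A)"

end

theory Submission
  imports Defs
begin

text \<open>Write \<open>A = H - I\<close> and \<open>P = I - z z\<^sup>T\<close>. Then \<open>H\<^sub>+ - I = P A P\<close>, and since \<open>P\<close> is an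
  orthogonal projection, \<open>trace ((P A P)\<^sup>2) = trace (P A P A)\<close>, which is the orthogonality
  relation. Expanding \<open>P = I - z z\<^sup>T\<close> gives
  \<open>\<parallel>A\<parallel>\<^sup>2 - \<parallel>P A P\<parallel>\<^sup>2 = 2 \<parallel>A z\<parallel>\<^sup>2 - (z\<^sup>T A z)\<^sup>2\<close>, and Cauchy-Schwarz bounds \<open>(z\<^sup>T A z)\<^sup>2\<close> by
  \<open>\<parallel>A z\<parallel>\<^sup>2\<close>. Finally \<open>z\<close> is an eigenvector of \<open>H\<^sub>+\<close> for the eigenvalue 1, every other
  eigenvector is orthogonal to \<open>z\<close>, and on the orthogonal complement of \<open>z\<close> the quadratic
  forms of \<open>H\<^sub>+\<close> and \<open>H\<close> agree, so the Rayleigh bound for \<open>H\<close> shows that the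
  corresponding eigenvalue is at least \<open>\<lambda>\<^sub>m\<^sub>i\<^sub>n(H)\<close>.\<close>

lemma matrix_diff_ldistrib: "(A::'a::ring_1^'n^'m) ** (B - C) = A ** B - A ** C"
  by (simp add: vec_eq_iff matrix_matrix_mult_def algebra_simps sum_subtractf)

lemma matrix_diff_rdistrib: "((A::'a::ring_1^'n^'m) - B) ** C = A ** C - B ** C"
  by (simp add: vec_eq_iff matrix_matrix_mult_def algebra_simps sum_subtractf)

lemma matrix_add_rdistrib: "((A::'a::semiring_1^'n^'m) + B) ** C = A ** C + B ** C"
  by (simp add: vec_eq_iff matrix_matrix_mult_def algebra_simps sum.distrib)

lemma matrix_vector_mult_outer: "outer x y *v w = (y \<bullet> w) *\<^sub>R x"
  by (simp add: vec_eq_iff outer_def matrix_vector_mult_def inner_vec_def sum_distrib_left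
      algebra_simps)

lemma outer_mult_outer: "outer x y ** outer u w = (y \<bullet> u) *\<^sub>R outer x w"
  by (simp add: vec_eq_iff outer_def matrix_matrix_mult_def inner_vec_def sum_distrib_left
      sum_distrib_right algebra_simps)

lemma trace_outer_mult: "trace (outer x y ** B) = y \<bullet> (B *v x)"
  by (simp add: trace_def outer_def matrix_matrix_mult_def matrix_vector_mult_def inner_vec_def
      sum_distrib_left sum_distrib_right algebra_simps) (rule sum.swap)

lemma transpose_outer: "transpose (outer x y) = outer y x"
  by (simp add: vec_eq_iff outer_def transpose_def)

lemma symmetric_mat_diff:
  "symmetric_mat A \<Longrightarrow> symmetric_mat B \<Longrightarrow> symmetric_mat (A - B)"
  by (auto simp: symmetric_mat_def vec_eq_iff transpose_def)

lemma symmetric_mat_add: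
  "symmetric_mat A \<Longrightarrow> symmetric_mat B \<Longrightarrow> symmetric_mat (A + B)"
  by (auto simp: symmetric_mat_def vec_eq_iff transpose_def)

lemma symmetric_mat_mat: "symmetric_mat (mat k)"
  by (simp add: symmetric_mat_def)

lemma symmetric_mat_outer: "symmetric_mat (outer z z)"
  by (simp add: symmetric_mat_def transpose_outer)

lemma symmetric_mat_sandwich:
  "symmetric_mat P \<Longrightarrow> symmetric_mat A \<Longrightarrow> symmetric_mat (P ** A ** P)"
  by (simp add: symmetric_mat_def matrix_transpose_mul matrix_mul_assoc)

lemma symmetric_mat_inner:
  assumes "symmetric_mat S"
  shows "(S *v x) \<bullet> y = x \<bullet> (S *v y)"
proof -
  have "S *v x = x v* S"
    using assms transpose_matrix_vector[of S x] by (simp add: symmetric_mat_def)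
  then show ?thesis by (simp add: dot_lmul_matrix)
qed

lemma trace_self_mult_nonneg:
  assumes "symmetric_mat X"
  shows "trace (X ** X) \<ge> 0"
proof -
  have "trace (X ** X) = trace (X ** transpose X)"
    using assms by (simp add: symmetric_mat_def)
  also have "\<dots> = (\<Sum>i\<in>UNIV. \<Sum>k\<in>UNIV. (X$i$k)\<^sup>2)"
    by (simp add: trace_def matrix_matrix_mult_def transpose_def power2_eq_square)
  finally show ?thesis by (simp add: sum_nonneg)
qed

lemma frob_norm_power2: "symmetric_mat X \<Longrightarrow> (frob_norm X)\<^sup>2 = trace (X ** X)"
  by (simp add: frob_norm_def mat_inner_def trace_self_mult_nonneg)

lemma trace_sandwich_square:
  fixes P A :: "'a::comm_semiring_1^'n^'n"
  assumes "P ** P = P"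
  shows "trace ((P ** A ** P) ** (P ** A ** P)) = trace ((P ** A ** P) ** A)"
proof -
  have "trace ((P ** A ** P) ** (P ** A ** P)) = trace ((P ** A ** (P ** P) ** A) ** P)"
    by (simp only: matrix_mul_assoc)
  also have "\<dots> = trace (P ** (P ** A ** (P ** P) ** A))"
    by (rule trace_mul_sym)
  also have "\<dots> = trace ((P ** P) ** A ** (P ** P) ** A)"
    by (simp only: matrix_mul_assoc)
  finally show ?thesis by (simp add: assms)
qed

definition perp_proj :: "real^'n \<Rightarrow> real^'n^'n" where
  "perp_proj z = mat 1 - outer z z"

lemma symmetric_mat_perp_proj: "symmetric_mat (perp_proj z)"
  by (simp add: perp_proj_def symmetric_mat_diff symmetric_mat_mat symmetric_mat_outer)

lemma perp_proj_idem: "z \<bullet> z = 1 \<Longrightarrow> perp_proj z ** perp_proj z = perp_proj z"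
  by (simp add: perp_proj_def matrix_diff_ldistrib matrix_diff_rdistrib outer_mult_outer)

lemma perp_proj_annihilates: "z \<bullet> z = 1 \<Longrightarrow> perp_proj z *v z = 0"
  by (simp add: perp_proj_def matrix_vector_mult_diff_rdistrib matrix_vector_mult_outer)

lemma perp_proj_fixes_orthogonal: "z \<bullet> v = 0 \<Longrightarrow> perp_proj z *v v = v"
  by (simp add: perp_proj_def matrix_vector_mult_diff_rdistrib matrix_vector_mult_outer)

lemma trace_perp_proj_sandwich:
  assumes "z \<bullet> z = 1"
  shows "trace ((perp_proj z ** A ** perp_proj z) ** A)
    = trace (A ** A) - 2 * (z \<bullet> (A *v (A *v z))) + (z \<bullet> (A *v z))\<^sup>2"
proof -
  let ?Q = "outer z z"
  have expand: "(perp_proj z ** A ** perp_proj z) ** A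
      = A ** A - ?Q ** (A ** A) - (A ** ?Q) ** A + ?Q ** (A ** ?Q ** A)"
    by (simp add: perp_proj_def matrix_diff_ldistrib matrix_diff_rdistrib matrix_add_rdistrib
        matrix_mul_assoc algebra_simps)
  have "trace ((A ** ?Q) ** A) = trace (?Q ** (A ** A))"
    by (metis matrix_mul_assoc trace_mul_sym)
  moreover have "trace (?Q ** (A ** A)) = z \<bullet> (A *v (A *v z))"
    by (simp add: trace_outer_mult matrix_vector_mul_assoc)
  moreover have "trace (?Q ** (A ** ?Q ** A)) = (z \<bullet> (A *v z))\<^sup>2"
    by (simp add: trace_outer_mult matrix_vector_mul_assoc[symmetric] matrix_vector_mult_outer
        matrix_vector_mult_scaleR power2_eq_square)
  ultimately show ?thesis
    unfolding expand by (simp add: trace_sub trace_add)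
qed

definition compress :: "real^'n \<Rightarrow> real^'n^'n \<Rightarrow> real^'n^'n" where
  "compress z H = perp_proj z ** H ** perp_proj z + outer z z"

lemma compress_minus_mat1:
  assumes "z \<bullet> z = 1"
  shows "compress z H - mat 1 = perp_proj z ** (H - mat 1) ** perp_proj z"
  using perp_proj_idem[OF assms]
  by (simp add: compress_def matrix_diff_ldistrib matrix_diff_rdistrib) (simp add: perp_proj_def)

lemma symmetric_mat_compress: "symmetric_mat H \<Longrightarrow> symmetric_mat (compress z H)"
  by (simp add: compress_def symmetric_mat_add symmetric_mat_sandwich symmetric_mat_perp_proj
      symmetric_mat_outer)

lemma compress_fixes: "z \<bullet> z = 1 \<Longrightarrow> compress z H *v z = z"
  by (simp add: compress_def matrix_vector_mult_add_rdistrib matrix_vector_mul_assoc[symmetric]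
      perp_proj_annihilates matrix_vector_mult_outer)

lemma compress_orthogonal:
  "z \<bullet> v = 0 \<Longrightarrow> compress z H *v v = perp_proj z *v (H *v v)"
  by (simp add: compress_def matrix_vector_mult_add_rdistrib matrix_vector_mul_assoc[symmetric]
      perp_proj_fixes_orthogonal matrix_vector_mult_outer)

lemma trace_compress_orthogonality:
  assumes "z \<bullet> z = 1"
  shows "trace ((compress z H - mat 1) ** (compress z H - H)) = 0"
proof -
  define M where "M = perp_proj z ** (H - mat 1) ** perp_proj z"
  have M: "compress z H - mat 1 = M"
    using compress_minus_mat1[OF assms] by (simp add: M_def)
  then have "compress z H - H = M - (H - mat 1)"
    by (metis add_diff_cancel_left' diff_add_cancel diff_diff_eq2)
  with M have "trace ((compress z H - mat 1) ** (compress z H - H))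
      = trace (M ** M) - trace (M ** (H - mat 1))"
    by (metis matrix_diff_ldistrib trace_sub)
  moreover have "trace (M ** M) = trace (M ** (H - mat 1))"
    unfolding M_def by (rule trace_sandwich_square[OF perp_proj_idem[OF assms]])
  ultimately show ?thesis by simp
qed

lemma frob_norm_compress_bound:
  assumes "z \<bullet> z = 1" and "symmetric_mat H"
  shows "(norm ((H - mat 1) *v z))\<^sup>2
    \<le> (frob_norm (H - mat 1))\<^sup>2 - (frob_norm (compress z H - mat 1))\<^sup>2"
proof -
  define A where "A = H - mat 1"
  have symA: "symmetric_mat A"
    using assms(2) by (simp add: A_def symmetric_mat_diff symmetric_mat_mat)
  have normAz: "(norm (A *v z))\<^sup>2 = z \<bullet> (A *v (A *v z))"
    by (simp add: power2_norm_eq_inner symmetric_mat_inner[OF symA])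
  have "(z \<bullet> (A *v z))\<^sup>2 \<le> (z \<bullet> z) * ((A *v z) \<bullet> (A *v z))"
    using Cauchy_Schwarz_ineq[of z "A *v z"] by simp
  then have cs: "(z \<bullet> (A *v z))\<^sup>2 \<le> (norm (A *v z))\<^sup>2"
    using assms(1) by (simp add: power2_norm_eq_inner)
  have "symmetric_mat (compress z H - mat 1)"
    by (simp add: assms(2) symmetric_mat_diff symmetric_mat_compress symmetric_mat_mat)
  then have "(frob_norm (compress z H - mat 1))\<^sup>2
      = trace ((compress z H - mat 1) ** (compress z H - mat 1))"
    by (rule frob_norm_power2)
  also have "\<dots> = trace ((perp_proj z ** A ** perp_proj z) ** A)"
    unfolding compress_minus_mat1[OF assms(1)] A_def
    by (rule trace_sandwich_square[OF perp_proj_idem[OF assms(1)]])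
  finally show ?thesis
    using cs normAz
    by (simp add: A_def[symmetric] frob_norm_power2[OF symA] trace_perp_proj_sandwich[OF assms(1)])
qed

lemma finite_eigenvalues:
  assumes "symmetric_mat S"
  shows "finite (eigenvalues S)"
proof -
  define vec where "vec c = (SOME v. v \<noteq> 0 \<and> S *v v = c *\<^sub>R v)" for c
  have vec: "vec c \<noteq> 0 \<and> S *v vec c = c *\<^sub>R vec c" if "c \<in> eigenvalues S" for c
    using that unfolding eigenvalues_def vec_def by (metis (mono_tags, lifting) mem_Collect_eq someI)
  have inj: "inj_on vec (eigenvalues S)"
  proof (rule inj_onI)
    fix c d assume c: "c \<in> eigenvalues S" and d: "d \<in> eigenvalues S" and "vec c = vec d"
    then have "c *\<^sub>R vec c = d *\<^sub>R vec c" using vec by metis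
    then show "c = d" using vec[OF c] by simp
  qed
  have "pairwise orthogonal (vec ` eigenvalues S)"
  proof (rule pairwise_imageI)
    fix c d assume c: "c \<in> eigenvalues S" and d: "d \<in> eigenvalues S" and "vec c \<noteq> vec d"
    then have "c \<noteq> d" by blast
    have "c * (vec c \<bullet> vec d) = (S *v vec c) \<bullet> vec d" using vec[OF c] by simp
    also have "\<dots> = vec c \<bullet> (S *v vec d)" by (rule symmetric_mat_inner[OF assms])
    also have "\<dots> = d * (vec c \<bullet> vec d)" using vec[OF d] by simp
    finally show "orthogonal (vec c) (vec d)"
      using \<open>c \<noteq> d\<close> by (simp add: orthogonal_def)
  qed
  moreover have "0 \<notin> vec ` eigenvalues S" using vec by force
  ultimately have "independent (vec ` eigenvalues S)"
    by (rule pairwise_orthogonal_independent)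
  then show ?thesis
    using finiteI_independent finite_imageD inj by blast
qed

lemma linear_quadratic_nonneg_imp_zero:
  fixes a b :: real
  assumes "\<And>t. a * t + b * t\<^sup>2 \<ge> 0"
  shows "a = 0"
proof (rule ccontr)
  assume "a \<noteq> 0"
  define c where "c = \<bar>b\<bar> + 1"
  have "c > 0" by (simp add: c_def)
  have "a * (- a / c) + b * (- a / c)\<^sup>2 = a\<^sup>2 * (b - c) / c\<^sup>2"
    using \<open>c > 0\<close> by (simp add: field_simps power2_eq_square)
  also have "\<dots> < 0"
    using \<open>a \<noteq> 0\<close> \<open>c > 0\<close> by (intro divide_neg_pos mult_pos_neg) (auto simp: c_def)
  finally show False using assms[of "- a / c"] by simp
qed

text \<open>A unit vector minimizing the quadratic form is an eigenvector: the first variation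
  of \<open>y \<mapsto> y\<^sup>T S y - m y\<^sup>T y\<close> at \<open>x\<close> must vanish.\<close>

lemma quadratic_form_minimizer_eigenvector:
  assumes "symmetric_mat S" and "x \<bullet> x = 1"
    and min: "\<And>y. (x \<bullet> (S *v x)) * (y \<bullet> y) \<le> y \<bullet> (S *v y)"
  shows "S *v x = (x \<bullet> (S *v x)) *\<^sub>R x"
proof -
  define m where "m = x \<bullet> (S *v x)"
  have Sx_m: "y \<bullet> (S *v x) - m * (x \<bullet> y) = 0" for y
  proof -
    have "2 * (y \<bullet> (S *v x) - m * (x \<bullet> y)) = 0"
    proof (rule linear_quadratic_nonneg_imp_zero)
      fix t :: real
      have "x \<bullet> (S *v y) = y \<bullet> (S *v x)"
        using symmetric_mat_inner[OF assms(1), of x y] by (simp add: inner_commute)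
      then have "(x + t *\<^sub>R y) \<bullet> (S *v (x + t *\<^sub>R y))
          = m + 2 * t * (y \<bullet> (S *v x)) + t\<^sup>2 * (y \<bullet> (S *v y))"
        by (simp add: m_def algebra_simps matrix_vector_right_distrib matrix_vector_mult_scaleR
            power2_eq_square)
      moreover have "(x + t *\<^sub>R y) \<bullet> (x + t *\<^sub>R y) = 1 + 2 * t * (x \<bullet> y) + t\<^sup>2 * (y \<bullet> y)"
        using assms(2)
        by (simp add: inner_add_left inner_add_right inner_commute[of y x] power2_eq_square
            algebra_simps)
      ultimately have "m * (1 + 2 * t * (x \<bullet> y) + t\<^sup>2 * (y \<bullet> y))
          \<le> m + 2 * t * (y \<bullet> (S *v x)) + t\<^sup>2 * (y \<bullet> (S *v y))"
        using min[of "x + t *\<^sub>R y"] by (simp add: m_def)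
      then show "0 \<le> 2 * (y \<bullet> (S *v x) - m * (x \<bullet> y)) * t + (y \<bullet> (S *v y) - m * (y \<bullet> y)) * t\<^sup>2"
        by (simp add: algebra_simps)
    qed
    then show ?thesis by simp
  qed
  define w where "w = S *v x - m *\<^sub>R x"
  have "w \<bullet> w = w \<bullet> (S *v x - m *\<^sub>R x)"
    by (simp add: w_def)
  also have "\<dots> = w \<bullet> (S *v x) - m * (x \<bullet> w)"
    by (simp add: inner_diff_right inner_commute[of w x])
  finally have "w \<bullet> w = w \<bullet> (S *v x) - m * (x \<bullet> w)" .
  then have "w = 0" using Sx_m[of w] by simp
  then show ?thesis by (simp add: w_def m_def)
qed

lemma lambda_min_rayleigh:
  fixes S :: "real^'n^'n"
  assumes "symmetric_mat S"
  shows "eigenvalues S \<noteq> {}" and "lambda_min S * (y \<bullet> y) \<le> y \<bullet> (S *v y)"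
proof -
  have "continuous_on (sphere (0::real^'n) 1) (\<lambda>y. y \<bullet> (S *v y))"
    by (intro continuous_intros linear_continuous_on matrix_vector_mul_bounded_linear)
  moreover have "sphere (0::real^'n) 1 \<noteq> {}" by simp
  ultimately obtain x where x: "x \<in> sphere 0 1"
    and x_min: "\<And>u. u \<in> sphere 0 1 \<Longrightarrow> x \<bullet> (S *v x) \<le> u \<bullet> (S *v u)"
    using continuous_attains_inf[OF compact_sphere] by blast
  define m where "m = x \<bullet> (S *v x)"
  have min: "m * (y \<bullet> y) \<le> y \<bullet> (S *v y)" for y
  proof (cases "y = 0")
    case False
    then have "m \<le> (y /\<^sub>R norm y) \<bullet> (S *v (y /\<^sub>R norm y))"
      unfolding m_def by (intro x_min) simp
    then have "m * (norm y)\<^sup>2 \<le> y \<bullet> (S *v y)"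
      using False by (simp add: matrix_vector_mult_scaleR power2_eq_square field_simps)
    then show ?thesis by (simp add: power2_norm_eq_inner)
  qed simp
  have "x \<bullet> x = 1" using x by (simp add: dot_square_norm)
  then have "S *v x = m *\<^sub>R x"
    using quadratic_form_minimizer_eigenvector[OF assms] min by (simp add: m_def)
  moreover have "x \<noteq> 0" using x by auto
  ultimately have m: "m \<in> eigenvalues S" unfolding eigenvalues_def by blast
  then show "eigenvalues S \<noteq> {}" by blast
  have "lambda_min S \<le> m"
    unfolding lambda_min_def using m finite_eigenvalues[OF assms] by simp
  then show "lambda_min S * (y \<bullet> y) \<le> y \<bullet> (S *v y)"
    using min[of y] mult_right_mono[of "lambda_min S" m "y \<bullet> y"] by fastforce
qed

lemma eigenvalue_compress_ge:
  assumes "z \<bullet> z = 1" and "symmetric_mat H" and c: "c \<in> eigenvalues (compress z H)"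
  shows "min (lambda_min H) 1 \<le> c"
proof (cases "c = 1")
  case False
  obtain v where "v \<noteq> 0" and v: "compress z H *v v = c *\<^sub>R v"
    using c unfolding eigenvalues_def by blast
  have "z \<bullet> v = (compress z H *v z) \<bullet> v"
    by (simp add: compress_fixes[OF assms(1)])
  also have "\<dots> = z \<bullet> (compress z H *v v)"
    by (rule symmetric_mat_inner[OF symmetric_mat_compress[OF assms(2)]])
  finally have "z \<bullet> v = c * (z \<bullet> v)"
    by (simp add: v)
  then have zv: "z \<bullet> v = 0" using False by (metis mult_cancel_right1)
  have "c * (v \<bullet> v) = v \<bullet> (compress z H *v v)"
    by (simp add: v)
  also have "\<dots> = v \<bullet> (perp_proj z *v (H *v v))"
    by (simp only: compress_orthogonal[OF zv])
  also have "\<dots> = v \<bullet> (H *v v)"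
    using symmetric_mat_inner[OF symmetric_mat_perp_proj, of z v "H *v v"]
    by (simp add: perp_proj_fixes_orthogonal[OF zv])
  finally have "lambda_min H * (v \<bullet> v) \<le> c * (v \<bullet> v)"
    using lambda_min_rayleigh(2)[OF assms(2)] by simp
  then show ?thesis using \<open>v \<noteq> 0\<close> by simp
qed simp

lemma lambda_min_compress:
  assumes "z \<bullet> z = 1" and "symmetric_mat H"
  shows "lambda_min (compress z H) \<ge> min (lambda_min H) 1"
  unfolding lambda_min_def[of "compress z H"]
  using finite_eigenvalues[OF symmetric_mat_compress[OF assms(2)]]
    lambda_min_rayleigh(1)[OF symmetric_mat_compress[OF assms(2)]]
    eigenvalue_compress_ge[OF assms]
  by simp

theorem mainTheorem3:
  fixes z :: "real^'n" and H :: "real^'n^'n"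
  assumes "norm z = 1"
    and "symmetric_mat H"
  defines "Hp \<equiv> (mat 1 - outer z z) ** H ** (mat 1 - outer z z) + outer z z"
  shows "trace ((Hp - mat 1) ** (Hp - H)) = 0 \<and>
    (norm ((H - mat 1) *v z))\<^sup>2 \<le> (frob_norm (H - mat 1))\<^sup>2 - (frob_norm (Hp - mat 1))\<^sup>2 \<and>
    lambda_min Hp \<ge> min (lambda_min H) 1"
proof -
  have unit: "z \<bullet> z = 1" using assms(1) by (simp add: dot_square_norm)
  have "Hp = compress z H" by (simp add: Hp_def compress_def perp_proj_def)
  then show ?thesis
    using trace_compress_orthogonality[OF unit] frob_norm_compress_bound[OF unit assms(2)]
      lambda_min_compress[OF unit assms(2)]
    by simp
qed

end
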